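(* For $0<a<b$ and $y>0$ let $R_{a,b}(y)$ be the number of pairs of nonnegative integers $(\ell,p)$ with $a\ell+bp\le y$. Then $$\frac{y^2}{2ab}+\frac{y}{2a}\le R_{a,b}(y)\le \frac{y^2}{2ab}+\frac{y}{2a}+\frac{y}{b}+\frac{b}{8a}+1.$$ *)

theory Defs
  imports Complex_Main
begin

definition lattice_count :: "real \<Rightarrow> real \<Rightarrow> real \<Rightarrow> nat" where
  "lattice_count a b y = card {(l::nat, p::nat). a * real l + b * real p \<le> y}"

end

theory Submission
  imports Defs
begin

text \<open>Count the points \<open>(l, p)\<close> column by column: for fixed \<open>p \<le> P = \<lfloor>y/b\<rfloor>\<close> there are
  \<open>\<lfloor>(y - b p)/a\<rfloor> + 1\<close> of them, a number between \<open>(y - b p)/a\<close> and \<open>(y - b p)/a + 1\<close>.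
  Summing, the count lies between the arithmetic series \<open>F = (P + 1)(2y - bP)/(2a)\<close> and
  \<open>F + P + 1\<close>. With \<open>u = bP \<in> (y - b, y]\<close>, the lower bound reduces to
  \<open>(y - u)(b - (y - u)) \<ge> 0\<close> and the upper bound to \<open>(y - u - b/2)\<^sup>2 + 2a(y - u) \<ge> 0\<close>.\<close>

lemma nat_multiples_le_eq_atMost:
  fixes a x :: real
  assumes "0 < a" and "0 \<le> x"
  shows "{l::nat. a * real l \<le> x} = {..nat \<lfloor>x / a\<rfloor>}"
proof -
  have "a * real l \<le> x \<longleftrightarrow> real l \<le> x / a" for l
    using assms(1) by (simp add: pos_le_divide_eq mult.commute)
  also have "\<dots> l \<longleftrightarrow> l \<le> nat \<lfloor>x / a\<rfloor>" for l
    using assms by (simp add: le_nat_floor le_floor_iff le_nat_iff)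
  finally show ?thesis by auto
qed

lemma card_nat_multiples_le_bounds:
  fixes a x :: real
  assumes "0 < a" and "0 \<le> x"
  shows "x / a \<le> real (card {l::nat. a * real l \<le> x})"
    and "real (card {l::nat. a * real l \<le> x}) \<le> x / a + 1"
proof -
  have "real (card {l::nat. a * real l \<le> x}) = real_of_int \<lfloor>x / a\<rfloor> + 1"
    using assms by (simp add: nat_multiples_le_eq_atMost)
  then show "x / a \<le> real (card {l::nat. a * real l \<le> x})"
    and "real (card {l::nat. a * real l \<le> x}) \<le> x / a + 1"
    by linarith+
qed

lemma lattice_count_eq_column_sum:
  fixes a b y :: real
  assumes "0 < a" and "0 < b" and "0 \<le> y"
  shows "lattice_count a b y
    = (\<Sum>p\<le>nat \<lfloor>y / b\<rfloor>. card {l::nat. a * real l \<le> y - b * real p})"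
proof -
  define P where "P = nat \<lfloor>y / b\<rfloor>"
  define column where "column p = {l::nat. a * real l \<le> y - b * real p}" for p
  have in_range: "p \<le> P \<longleftrightarrow> b * real p \<le> y" for p
    using assms by (simp add: P_def le_nat_iff le_floor_iff pos_le_divide_eq mult.commute)
  have "{(l, p). a * real l + b * real p \<le> y} = (\<lambda>(p, l). (l, p)) ` (SIGMA p:{..P}. column p)"
  proof -
    have "a * real l + b * real p \<le> y \<Longrightarrow> p \<le> P" for l p
      using assms(1) in_range[of p] mult_nonneg_nonneg[of a "real l"] by linarith
    then show ?thesis by (force simp: column_def image_iff algebra_simps)
  qed
  moreover have "finite (column p)" if "p \<le> P" for p
    using that assms(1) in_range[of p] by (simp add: column_def nat_multiples_le_eq_atMost)
  ultimately have "lattice_count a b y = card (SIGMA p:{..P}. column p)"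
    unfolding lattice_count_def by (simp add: card_image inj_on_def)
  also have "\<dots> = (\<Sum>p\<le>P. card (column p))"
    using \<open>\<And>p. p \<le> P \<Longrightarrow> finite (column p)\<close> by (simp add: card_SigmaI)
  finally show ?thesis by (simp add: P_def column_def)
qed

lemma lattice_count_bounds_column_sum:
  fixes a b y :: real
  assumes "0 < a" and "0 < b" and "0 \<le> y"
  defines "P \<equiv> nat \<lfloor>y / b\<rfloor>"
  shows "(\<Sum>p\<le>P. (y - b * real p) / a) \<le> real (lattice_count a b y)"
    and "real (lattice_count a b y) \<le> (\<Sum>p\<le>P. (y - b * real p) / a) + real P + 1"
proof -
  have column_nonneg: "0 \<le> y - b * real p" if "p \<le> P" for p
    using that assms by (simp add: P_def le_nat_iff le_floor_iff pos_le_divide_eq mult.commute)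
  have count: "real (lattice_count a b y)
      = (\<Sum>p\<le>P. real (card {l::nat. a * real l \<le> y - b * real p}))"
    using assms by (simp add: lattice_count_eq_column_sum)
  show "(\<Sum>p\<le>P. (y - b * real p) / a) \<le> real (lattice_count a b y)"
    unfolding count
    by (intro sum_mono card_nat_multiples_le_bounds(1) assms(1) column_nonneg) simp
  have "real (lattice_count a b y) \<le> (\<Sum>p\<le>P. (y - b * real p) / a + 1)"
    unfolding count
    by (intro sum_mono card_nat_multiples_le_bounds(2) assms(1) column_nonneg) simp
  then show "real (lattice_count a b y) \<le> (\<Sum>p\<le>P. (y - b * real p) / a) + real P + 1"
    by (simp add: sum.distrib)
qed

lemma column_sum_closed_form:
  fixes a b y :: real
  shows "(\<Sum>p\<le>P. (y - b * real p) / a) = (real P + 1) * (2 * y - b * real P) / (2 * a)"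
proof -
  have "2 * (\<Sum>p\<le>P. y + real p * - b) = (real P + 1) * (2 * y + real P * - b)"
    using double_arith_series[of y "- b" P] by (simp add: atLeast0AtMost)
  then have sum_eq: "(\<Sum>p\<le>P. y - b * real p) = (real P + 1) * (2 * y - b * real P) / 2"
    by (simp add: algebra_simps)
  show ?thesis
    unfolding sum_divide_distrib[symmetric] sum_eq by simp
qed

lemma column_sum_lower_bound:
  fixes a b y t :: real
  assumes "0 < a" and "0 < b" and "y - b < b * t" and "b * t \<le> y"
  shows "y^2 / (2*a*b) + y / (2*a) \<le> (t + 1) * (2 * y - b * t) / (2 * a)"
proof -
  have "0 \<le> (y - b * t) * (b - (y - b * t))"
    using assms(3,4) by simp
  then have "y^2 + b * y \<le> b * (t + 1) * (2 * y - b * t)"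
    by (simp add: algebra_simps power2_eq_square)
  then have "(y^2 + b * y) / (2*a*b) \<le> b * (t + 1) * (2 * y - b * t) / (2*a*b)"
    by (rule divide_right_mono) (use assms(1,2) in simp)
  then show ?thesis
    using assms(1,2) by (simp add: add_divide_distrib)
qed

lemma column_sum_upper_bound:
  fixes a b y t :: real
  assumes "0 < a" and "0 < b" and "b * t \<le> y"
  shows "(t + 1) * (2 * y - b * t) / (2 * a) + t + 1
    \<le> y^2 / (2*a*b) + y / (2*a) + y / b + b / (8*a) + 1"
proof -
  have "0 \<le> (y - b * t - b / 2)^2 + 2 * a * (y - b * t)"
    using assms(1,3) by simp
  then have "b * (t + 1) * (2 * y - b * t) + 2 * a * b * t
      \<le> y^2 + b * y + 2 * a * y + b^2 / 4"
    by (simp add: algebra_simps power2_eq_square)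
  then have "(b * (t + 1) * (2 * y - b * t) + 2 * a * b * t) / (2*a*b)
      \<le> (y^2 + b * y + 2 * a * y + b^2 / 4) / (2*a*b)"
    by (rule divide_right_mono) (use assms(1,2) in simp)
  then show ?thesis
    using assms(1,2) by (simp add: add_divide_distrib power2_eq_square)
qed

theorem proposition2p5:
  fixes a b y :: real
  assumes "0 < a" and "a < b" and "0 < y"
  shows "y^2 / (2*a*b) + y / (2*a) \<le> real (lattice_count a b y)
    \<and> real (lattice_count a b y) \<le> y^2 / (2*a*b) + y / (2*a) + y / b + b / (8*a) + 1"
proof -
  \<comment> \<open>The hypothesis \<open>a < b\<close> is only needed for \<open>0 < b\<close>.\<close>
  have b_pos: "0 < b" using assms(1,2) by simp
  define P where "P = nat \<lfloor>y / b\<rfloor>"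
  have "real P = real_of_int \<lfloor>y / b\<rfloor>"
    using assms by (simp add: P_def)
  then have "y / b - 1 < real P" and "real P \<le> y / b"
    by linarith+
  then have P_lower: "y - b < b * real P" and P_upper: "b * real P \<le> y"
    using b_pos by (simp_all add: field_simps)
  define F where "F = (real P + 1) * (2 * y - b * real P) / (2 * a)"
  have "F \<le> real (lattice_count a b y)"
    and "real (lattice_count a b y) \<le> F + real P + 1"
    using lattice_count_bounds_column_sum[OF assms(1) b_pos] assms(3)
    by (simp_all add: F_def P_def column_sum_closed_form)
  moreover have "y^2 / (2*a*b) + y / (2*a) \<le> F"
    unfolding F_def using assms(1) b_pos P_lower P_upper by (rule column_sum_lower_bound)
  moreover have "F + real P + 1 \<le> y^2 / (2*a*b) + y / (2*a) + y / b + b / (8*a) + 1"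
    unfolding F_def using assms(1) b_pos P_upper by (rule column_sum_upper_bound)
  ultimately show ?thesis
    by linarith
qed

end
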